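(* Let $\sigma>0$, let $T,T'$ be exponentially distributed with expectation $\sigma$, let $G,G'\ge0$ be identically distributed, and let $T,T',G,G'$ be independent. Then for all $t\in\mathbb R$ and $\tau>0$, $$\mathbf E\big[e^{-|t+T+G-T'-G'|/\tau}\big]=\frac{\tau}{\tau+\sigma}\cdot\frac{\tau\mathbf E\big[e^{-|G'-G-t|/\tau}\big]-\sigma\mathbf E\big[e^{-|G'-G-t|/\sigma}\big]}{\tau-\sigma}.$$ Moreover, if $S$ is a random variable, independent of $T,T',G,G'$, with symmetric distribution ($S\overset{d}{=}-S$), then $$\mathbf E\big[e^{-||T+G-T'-G'|-S|/\tau}\big]=\mathbf E\big[e^{-|T+G-T'-G'+S|/\tau}\big]=\frac{\tau}{\tau+\sigma}\cdot\frac{\tau\mathbf E\big[e^{-|G'-G+S|/\tau}\big]-\sigma\mathbf E\big[e^{-|G'-G+S|/\sigma}\big]}{\tau-\sigma}.$$ When $\tau=\sigma$, the right-hand sides are understood as their limits as $\tau\to\sigma$. *)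

theory Defs
  imports "HOL-Probability.Probability"
begin

end

theory Submission
  imports Defs "HOL-Real_Asymp.Real_Asymp"
begin

(*
  Let W be t + G - G' (resp. G - G' + S); it is independent of the exponential times T, T'.
  Integrating out T and then T' against the exponential density turns E e^{-|T - T' + W|/\<tau>}
  into E \<phi>(|W|) with \<phi> = exp_abs_diff (1/\<sigma>) (1/\<tau>), i.e. for \<tau> \<noteq> \<sigma>
    \<phi>(a) = \<tau>/(\<tau>+\<sigma>) (\<tau> e^{-a/\<tau>} - \<sigma> e^{-a/\<sigma>})/(\<tau>-\<sigma>),
  which is linear in the kernels e^{-a/\<tau>} and e^{-a/\<sigma>}. The case \<tau> = \<sigma> follows from the
  continuity of \<tau> \<mapsto> E e^{-|Z|/\<tau>} (dominated convergence). For symmetric S, replacing S by -S on the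
  event Y \<ge> 0, with Y = T + G - T' - G', turns ||Y| - S| into |Y + S|; the same replacement turns
  |G - G' + S| into |G' - G + S|.
*)

lemma has_bochner_integral_exp_Icc:
  fixes k p q :: real
  assumes "p \<le> q" "k \<noteq> 0"
  shows "has_bochner_integral lborel (\<lambda>x. indicator {p..q} x * exp (k*x)) ((exp (k*q) - exp (k*p)) / k)"
proof -
  have cont: "continuous_on {p..q} (\<lambda>x. exp (k*x))"
    by (intro continuous_intros)
  have "integrable lborel (\<lambda>x. indicator {p..q} x * exp (k*x))"
    using borel_integrable_atLeastAtMost'[OF cont] by (simp add: set_integrable_def)
  moreover have "integral\<^sup>L lborel (\<lambda>x. indicator {p..q} x *\<^sub>R exp (k*x)) = exp (k*q)/k - exp (k*p)/k"
    using assms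
    by (intro integral_FTC_atLeastAtMost cont)
       (auto intro!: derivative_eq_intros simp: has_real_derivative_iff_has_vector_derivative[symmetric])
  ultimately show ?thesis
    by (simp add: has_bochner_integral_iff diff_divide_distrib)
qed

lemma has_bochner_integral_exp_Ici:
  fixes k p :: real
  assumes "k < 0"
  shows "has_bochner_integral lborel (\<lambda>x. indicator {p..} x * exp (k*x)) (- exp (k*p) / k)"
proof (rule has_bochner_integral_nn_integral)
  have "(\<integral>\<^sup>+x. ennreal (exp (k*x)) * indicator {p..} x \<partial>lborel) = 0 - exp (k*p) / k"
    using assms
    by (intro nn_integral_FTC_atLeast) (auto intro!: derivative_eq_intros, real_asymp)
  then show "(\<integral>\<^sup>+x. ennreal (indicator {p..} x * exp (k*x)) \<partial>lborel) = ennreal (- exp (k*p) / k)"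
    by (simp add: mult.commute indicator_mult_ennreal)
qed (use assms in \<open>auto simp: divide_le_0_iff\<close>)

lemma has_bochner_integral_exp_Ioi:
  fixes k p :: real
  assumes "k < 0"
  shows "has_bochner_integral lborel (\<lambda>x. indicator {p<..} x * exp (k*x)) (- exp (k*p) / k)"
proof -
  have "has_bochner_integral lborel
      (\<lambda>x. indicator {p..} x * exp (k*x) - indicator {p..p} x * exp (k*x))
      (- exp (k*p) / k - (exp (k*p) - exp (k*p)) / k)"
    using assms by (intro has_bochner_integral_diff has_bochner_integral_exp_Ici has_bochner_integral_exp_Icc) auto
  then show ?thesis
    by (rule has_bochner_integral_cong[THEN iffD1, rotated -1]) (auto split: split_indicator)
qed

(* E e^{-m|T + c|} for T exponential with rate l; the closed form divides by m - l. *)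
definition exp_abs_shift :: "real \<Rightarrow> real \<Rightarrow> real \<Rightarrow> real" where
  "exp_abs_shift l m c =
     (if 0 \<le> c then l / (l + m) * exp (- m * c)
      else 2 * l * m / ((m - l) * (l + m)) * exp (l * c) - l / (m - l) * exp (m * c))"

lemma borel_measurable_exp_abs_shift [measurable]: "exp_abs_shift l m \<in> borel_measurable borel"
  unfolding exp_abs_shift_def by measurable

lemma has_bochner_integral_exp_abs_shift:
  fixes l m c :: real
  assumes l: "0 < l" and m: "0 < m" and lm: "l \<noteq> m"
  shows "has_bochner_integral lborel (\<lambda>u. exponential_density l u * exp (- m * \<bar>u + c\<bar>))
           (exp_abs_shift l m c)"
proof (cases "0 \<le> c")
  case True
  have "has_bochner_integral lborel (\<lambda>u. l * exp (- m * c) * (indicator {0..} u * exp (- (l + m) * u)))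
      (l * exp (- m * c) * (- exp (- (l + m) * 0) / - (l + m)))"
    (is "has_bochner_integral _ ?f ?v")
    using l m by (intro has_bochner_integral_mult_right has_bochner_integral_exp_Ici) auto
  then show ?thesis
  proof (rule has_bochner_integral_cong[THEN iffD1, rotated -1])
    show "?f u = exponential_density l u * exp (- m * \<bar>u + c\<bar>)" for u
      using True by (auto simp: exponential_density_def mult_exp_exp algebra_simps split: split_indicator)
    have "l + m \<noteq> 0" using l m by auto
    then show "?v = exp_abs_shift l m c"
      using True by (simp add: exp_abs_shift_def field_simps)
  qed simp
next
  case False
  have "has_bochner_integral lborel
      (\<lambda>u. l * exp (m * c) * (indicator {0..-c} u * exp ((m - l) * u))
         + l * exp (- m * c) * (indicator {-c<..} u * exp (- (l + m) * u)))
      (l * exp (m * c) * ((exp ((m - l) * - c) - exp ((m - l) * 0)) / (m - l))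
         + l * exp (- m * c) * (- exp (- (l + m) * - c) / - (l + m)))"
    (is "has_bochner_integral _ ?f ?v")
    using l m lm False
    by (intro has_bochner_integral_add has_bochner_integral_mult_right
          has_bochner_integral_exp_Ioi has_bochner_integral_exp_Icc) auto
  then show ?thesis
  proof (rule has_bochner_integral_cong[THEN iffD1, rotated -1])
    show "?f u = exponential_density l u * exp (- m * \<bar>u + c\<bar>)" for u
      using False by (auto simp: exponential_density_def mult_exp_exp algebra_simps split: split_indicator)
    have "m - l \<noteq> 0" "l + m \<noteq> 0" using l m lm by auto
    have "?v = l * (exp (l * c) - exp (m * c)) / (m - l) + l * exp (l * c) / (l + m)"
      using \<open>l + m \<noteq> 0\<close>
      by (simp add: mult_exp_exp algebra_simps diff_divide_distrib flip: exp_add) (simp add: field_simps)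
    also have "\<dots> = exp_abs_shift l m c"
      using False \<open>m - l \<noteq> 0\<close> \<open>l + m \<noteq> 0\<close>
      by (simp add: exp_abs_shift_def divide_simps) (simp add: algebra_simps)
    finally show "?v = exp_abs_shift l m c" .
  qed simp
qed

lemma exponential_density_mult_exp_abs_shift_tail:
  fixes l m a v :: real
  assumes "0 \<le> v" "a < v"
  shows "exponential_density l v * exp_abs_shift l m (a - v)
       = l * (2 * l * m / ((m - l) * (l + m))) * exp (l * a) * exp (- (2 * l) * v)
         - l * l / (m - l) * exp (m * a) * exp (- (l + m) * v)"
  using assms by (simp add: exponential_density_def exp_abs_shift_def mult_exp_exp algebra_simps)

definition exp_abs_diff :: "real \<Rightarrow> real \<Rightarrow> real \<Rightarrow> real" where
  "exp_abs_diff l m a = l / (l + m) * ((m * exp (- l * a) - l * exp (- m * a)) / (m - l))"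

lemma has_bochner_integral_exp_abs_diff_nonneg:
  fixes l m a :: real
  assumes l: "0 < l" and m: "0 < m" and lm: "l \<noteq> m" and a: "0 \<le> a"
  shows "has_bochner_integral lborel (\<lambda>v. exponential_density l v * exp_abs_shift l m (a - v))
           (exp_abs_diff l m a)"
proof -
  define K where "K = 2 * l * m / ((m - l) * (l + m))"
  have "has_bochner_integral lborel
      (\<lambda>v. l * l / (l + m) * exp (- m * a) * (indicator {0..a} v * exp ((m - l) * v))
         + l * K * exp (l * a) * (indicator {a<..} v * exp (- (2 * l) * v))
         - l * l / (m - l) * exp (m * a) * (indicator {a<..} v * exp (- (l + m) * v)))
      (l * l / (l + m) * exp (- m * a) * ((exp ((m - l) * a) - exp ((m - l) * 0)) / (m - l))
         + l * K * exp (l * a) * (- exp (- (2 * l) * a) / - (2 * l))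
         - l * l / (m - l) * exp (m * a) * (- exp (- (l + m) * a) / - (l + m)))"
    (is "has_bochner_integral _ ?f ?v")
    using l m lm a
    by (intro has_bochner_integral_add has_bochner_integral_diff has_bochner_integral_mult_right
          has_bochner_integral_exp_Ioi has_bochner_integral_exp_Icc) auto
  then show ?thesis
  proof (rule has_bochner_integral_cong[THEN iffD1, rotated -1])
    fix v
    consider "v < 0" | "0 \<le> v" "v \<le> a" | "a < v" by linarith
    then show "?f v = exponential_density l v * exp_abs_shift l m (a - v)"
    proof cases
      case 2
      then show ?thesis
        by (simp add: exponential_density_def exp_abs_shift_def mult_exp_exp algebra_simps)
    next
      case 3
      then show ?thesis
        using a exponential_density_mult_exp_abs_shift_tail[of v a l m] by (simp add: K_def)
    qed (use a in \<open>simp add: exponential_density_def\<close>)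
  next
    define X Y where "X = exp (- l * a)" and "Y = exp (- m * a)"
    have "X > 0" "Y > 0" by (simp_all add: X_def Y_def)
    have exps: "exp (l * a) = 1 / X" "exp (m * a) = 1 / Y" "exp ((m - l) * a) = X / Y"
        "exp (- (2 * l) * a) = X * X" "exp (- (l + m) * a) = X * Y"
      by (simp_all add: X_def Y_def mult_exp_exp exp_minus field_simps flip: exp_diff)
    have "m - l \<noteq> 0" "l + m \<noteq> 0" using l m lm by auto
    then show "?v = exp_abs_diff l m a"
      using l \<open>X > 0\<close> \<open>Y > 0\<close> unfolding exps exp_abs_diff_def K_def X_def[symmetric] Y_def[symmetric]
      by (simp add: divide_simps) (simp add: algebra_simps)
  qed simp
qed

lemma has_bochner_integral_exp_abs_diff_neg:
  fixes l m a :: real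
  assumes l: "0 < l" and m: "0 < m" and lm: "l \<noteq> m" and a: "a < 0"
  shows "has_bochner_integral lborel (\<lambda>v. exponential_density l v * exp_abs_shift l m (a - v))
           (exp_abs_diff l m (- a))"
proof -
  define K where "K = 2 * l * m / ((m - l) * (l + m))"
  have "has_bochner_integral lborel
      (\<lambda>v. l * K * exp (l * a) * (indicator {0..} v * exp (- (2 * l) * v))
         - l * l / (m - l) * exp (m * a) * (indicator {0..} v * exp (- (l + m) * v)))
      (l * K * exp (l * a) * (- exp (- (2 * l) * 0) / - (2 * l))
         - l * l / (m - l) * exp (m * a) * (- exp (- (l + m) * 0) / - (l + m)))"
    (is "has_bochner_integral _ ?f ?v")
    using l m by (intro has_bochner_integral_diff has_bochner_integral_mult_right
        has_bochner_integral_exp_Ici) auto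
  then show ?thesis
  proof (rule has_bochner_integral_cong[THEN iffD1, rotated -1])
    show "?f v = exponential_density l v * exp_abs_shift l m (a - v)" for v
      using a exponential_density_mult_exp_abs_shift_tail[of v a l m]
      by (cases "0 \<le> v") (simp_all add: K_def exponential_density_def)
    have "m - l \<noteq> 0" "l + m \<noteq> 0" using l m lm by auto
    then show "?v = exp_abs_diff l m (- a)"
      using l by (simp add: exp_abs_diff_def K_def divide_simps) (simp add: algebra_simps)
  qed simp
qed

lemma has_bochner_integral_exp_abs_diff:
  fixes l m a :: real
  assumes "0 < l" "0 < m" "l \<noteq> m"
  shows "has_bochner_integral lborel (\<lambda>v. exponential_density l v * exp_abs_shift l m (a - v))
           (exp_abs_diff l m \<bar>a\<bar>)"
  using has_bochner_integral_exp_abs_diff_nonneg[OF assms] has_bochner_integral_exp_abs_diff_neg[OF assms]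
  by (cases "0 \<le> a") auto

lemma exp_abs_diff_inverse:
  fixes \<sigma> \<tau> a :: real
  assumes "0 < \<sigma>" "0 < \<tau>" "\<tau> \<noteq> \<sigma>"
  shows "exp_abs_diff (1 / \<sigma>) (1 / \<tau>) a
       = \<tau> / (\<tau> + \<sigma>) * ((\<tau> * exp (- a / \<tau>) - \<sigma> * exp (- a / \<sigma>)) / (\<tau> - \<sigma>))"
proof -
  have "\<tau> - \<sigma> \<noteq> 0" "\<tau> + \<sigma> \<noteq> 0" using assms by auto
  then show ?thesis
    using assms by (simp add: exp_abs_diff_def divide_simps) (simp add: algebra_simps)
qed

lemma (in prob_space) indep_var_restrict_compose:
  fixes X :: "'i \<Rightarrow> 'a \<Rightarrow> real"
  assumes "indep_vars (\<lambda>_. borel) X I" "A \<inter> B = {}" "A \<subseteq> I" "B \<subseteq> I"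
    and "f \<in> borel_measurable (PiM A (\<lambda>_. borel))" "g \<in> borel_measurable (PiM B (\<lambda>_. borel))"
  shows "indep_var borel (\<lambda>\<omega>. f (restrict (\<lambda>i. X i \<omega>) A)) borel (\<lambda>\<omega>. g (restrict (\<lambda>i. X i \<omega>) B))"
  using indep_var_compose[OF indep_var_restrict[OF assms(1-4)] assms(5,6)] by (simp add: comp_def)

lemma (in prob_space) integral_indep_var_iterated:
  fixes X Y :: "'a \<Rightarrow> real" and h :: "real \<Rightarrow> real \<Rightarrow> real"
  assumes ind: "indep_var borel X borel Y"
    and h[measurable]: "(\<lambda>p. h (fst p) (snd p)) \<in> borel_measurable (borel \<Otimes>\<^sub>M borel)"
    and bound: "\<And>u y. \<bar>h u y\<bar> \<le> K"
  shows "(\<integral>x. h (X x) (Y x) \<partial>M) = (\<integral>x. (\<integral>z. h (X z) (Y x) \<partial>M) \<partial>M)"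
proof -
  have [measurable]: "X \<in> borel_measurable M" "Y \<in> borel_measurable M"
    using indep_var_rv1[OF ind] indep_var_rv2[OF ind] .
  interpret PX: prob_space "distr M borel X" by (rule prob_space_distr) simp
  interpret PY: prob_space "distr M borel Y" by (rule prob_space_distr) simp
  interpret PXY: pair_prob_space "distr M borel X" "distr M borel Y" ..
  have joint: "distr M borel X \<Otimes>\<^sub>M distr M borel Y = distr M (borel \<Otimes>\<^sub>M borel) (\<lambda>x. (X x, Y x))"
    using ind by (simp add: indep_var_distribution_eq)
  have "(\<lambda>p. h (fst p) (snd p)) \<in> borel_measurable (distr M borel X \<Otimes>\<^sub>M distr M borel Y)"
    using h by (simp add: joint)
  then have "integrable (distr M borel X \<Otimes>\<^sub>M distr M borel Y) (\<lambda>(u, y). h u y)"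
    using bound by (intro PXY.P.integrable_const_bound[where B=K]) (auto simp: case_prod_beta')
  note fubini = PXY.integral_snd[OF this]
  have [measurable]: "(\<lambda>u. h u y) \<in> borel_measurable borel" for y
    using measurable_compose[OF measurable_Pair2'[of y borel borel] h] by simp
  have [measurable]: "(\<lambda>(y, z). h (X z) y) \<in> borel_measurable (borel \<Otimes>\<^sub>M M)"
  proof -
    have "(\<lambda>q. (X (snd q), fst q)) \<in> measurable (borel \<Otimes>\<^sub>M M) (borel \<Otimes>\<^sub>M borel)"
      by measurable
    from measurable_compose[OF this h] show ?thesis by (simp add: case_prod_beta')
  qed
  have "(\<integral>x. h (X x) (Y x) \<partial>M) = (\<integral>p. h (fst p) (snd p) \<partial>distr M (borel \<Otimes>\<^sub>M borel) (\<lambda>x. (X x, Y x)))"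
    by (subst integral_distr) auto
  also have "\<dots> = (\<integral>y. (\<integral>u. h u y \<partial>distr M borel X) \<partial>distr M borel Y)"
    using fubini by (simp add: joint case_prod_beta')
  also have "\<dots> = (\<integral>y. (\<integral>z. h (X z) y \<partial>M) \<partial>distr M borel Y)"
    by (intro Bochner_Integration.integral_cong refl) (simp add: integral_distr)
  also have "\<dots> = (\<integral>x. (\<integral>z. h (X z) (Y x) \<partial>M) \<partial>M)"
    by (subst integral_distr) auto
  finally show ?thesis .
qed

lemma (in prob_space) integral_indep_var_symmetric:
  fixes X S :: "'a \<Rightarrow> real" and h :: "real \<Rightarrow> real \<Rightarrow> real"
  assumes ind: "indep_var borel X borel S"
    and sym: "distr M borel S = distr M borel (\<lambda>x. - S x)"
    and h[measurable]: "(\<lambda>p. h (fst p) (snd p)) \<in> borel_measurable (borel \<Otimes>\<^sub>M borel)"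
  shows "(\<integral>x. h (X x) (S x) \<partial>M) = (\<integral>x. h (X x) (- S x) \<partial>M)"
proof -
  have [measurable]: "X \<in> borel_measurable M" "S \<in> borel_measurable M"
    using indep_var_rv1[OF ind] indep_var_rv2[OF ind] .
  have ind_neg: "indep_var borel X borel (\<lambda>x. - S x)"
    using indep_var_compose[OF ind, of "\<lambda>x. x" borel "\<lambda>x. - x" borel] by (simp add: comp_def)
  have "distr M (borel \<Otimes>\<^sub>M borel) (\<lambda>x. (X x, S x)) = distr M borel X \<Otimes>\<^sub>M distr M borel S"
    using ind by (simp add: indep_var_distribution_eq)
  also have "\<dots> = distr M (borel \<Otimes>\<^sub>M borel) (\<lambda>x. (X x, - S x))"
    using ind_neg by (simp add: sym indep_var_distribution_eq)
  finally have joint: "distr M (borel \<Otimes>\<^sub>M borel) (\<lambda>x. (X x, S x))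
      = distr M (borel \<Otimes>\<^sub>M borel) (\<lambda>x. (X x, - S x))" .
  have "(\<integral>x. h (X x) (S x) \<partial>M) = (\<integral>p. h (fst p) (snd p) \<partial>distr M (borel \<Otimes>\<^sub>M borel) (\<lambda>x. (X x, S x)))"
    by (subst integral_distr) auto
  also have "\<dots> = (\<integral>x. h (X x) (- S x) \<partial>M)"
    unfolding joint by (subst integral_distr) auto
  finally show ?thesis .
qed

lemma (in prob_space) integral_exp_abs_shift:
  fixes T :: "'a \<Rightarrow> real" and l m c :: real
  assumes "0 < l" "0 < m" "l \<noteq> m"
    and "distributed M lborel T (\<lambda>x. ennreal (exponential_density l x))"
  shows "(\<integral>z. exp (- m * \<bar>T z + c\<bar>) \<partial>M) = exp_abs_shift l m c"
proof -
  have "(\<integral>z. exp (- m * \<bar>T z + c\<bar>) \<partial>M) = (\<integral>u. exponential_density l u * exp (- m * \<bar>u + c\<bar>) \<partial>lborel)"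
    using assms by (intro distributed_integral[symmetric]) (auto simp: exponential_density_nonneg)
  then show ?thesis
    using has_bochner_integral_exp_abs_shift[OF assms(1-3)] by (simp add: has_bochner_integral_iff)
qed

lemma (in prob_space) integral_exp_abs_shift_diff:
  fixes T' :: "'a \<Rightarrow> real" and l m a :: real
  assumes "0 < l" "0 < m" "l \<noteq> m"
    and "distributed M lborel T' (\<lambda>x. ennreal (exponential_density l x))"
  shows "(\<integral>z. exp_abs_shift l m (a - T' z) \<partial>M) = exp_abs_diff l m \<bar>a\<bar>"
proof -
  have "(\<integral>z. exp_abs_shift l m (a - T' z) \<partial>M)
      = (\<integral>v. exponential_density l v * exp_abs_shift l m (a - v) \<partial>lborel)"
    using assms by (intro distributed_integral[symmetric]) (auto simp: exponential_density_nonneg)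
  then show ?thesis
    using has_bochner_integral_exp_abs_diff[OF assms(1-3)] by (simp add: has_bochner_integral_iff)
qed

lemma (in prob_space) integral_exp_abs_exponential_diff:
  fixes T T' W :: "'a \<Rightarrow> real" and l m :: real
  assumes lm: "0 < l" "0 < m" "l \<noteq> m"
    and expT: "distributed M lborel T (\<lambda>x. ennreal (exponential_density l x))"
    and expT': "distributed M lborel T' (\<lambda>x. ennreal (exponential_density l x))"
    and indT: "indep_var borel T borel (\<lambda>x. W x - T' x)"
    and indT': "indep_var borel T' borel W"
  shows "(\<integral>x. exp (- m * \<bar>T x - T' x + W x\<bar>) \<partial>M) = (\<integral>x. exp_abs_diff l m \<bar>W x\<bar> \<partial>M)"
proof -
  have [measurable]: "T \<in> borel_measurable M" "T' \<in> borel_measurable M"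
    using indep_var_rv1[OF indT] indep_var_rv1[OF indT'] .
  have shift: "(\<integral>z. exp (- m * \<bar>T z + c\<bar>) \<partial>M) = exp_abs_shift l m c" for c
    by (rule integral_exp_abs_shift[OF lm expT])
  have shift_bound: "\<bar>exp_abs_shift l m c\<bar> \<le> 1" for c
  proof -
    have "integrable M (\<lambda>z. exp (- m * \<bar>T z + c\<bar>))"
      using lm by (intro integrable_const_bound[where B=1]) auto
    then have "(\<integral>z. exp (- m * \<bar>T z + c\<bar>) \<partial>M) \<le> 1"
      using lm by (intro integral_le_const AE_I2) auto
    moreover have "0 \<le> (\<integral>z. exp (- m * \<bar>T z + c\<bar>) \<partial>M)"
      by (simp add: integral_nonneg_AE)
    ultimately show ?thesis
      using shift[of c] by linarith
  qed
  have "(\<integral>x. exp (- m * \<bar>T x - T' x + W x\<bar>) \<partial>M)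
      = (\<integral>x. (\<lambda>u y. exp (- m * \<bar>u + y\<bar>)) (T x) (W x - T' x) \<partial>M)"
    by (simp add: algebra_simps)
  also have "\<dots> = (\<integral>x. (\<integral>z. exp (- m * \<bar>T z + (W x - T' x)\<bar>) \<partial>M) \<partial>M)"
    using lm by (intro integral_indep_var_iterated[OF indT, where K=1]) auto
  also have "\<dots> = (\<integral>x. exp_abs_shift l m (W x - T' x) \<partial>M)"
    by (simp only: shift)
  also have "\<dots> = (\<integral>x. (\<integral>z. exp_abs_shift l m (W x - T' z) \<partial>M) \<partial>M)"
    using integral_indep_var_iterated[OF indT', where K=1 and h="\<lambda>v w. exp_abs_shift l m (w - v)"]
      shift_bound by simp
  also have "\<dots> = (\<integral>x. exp_abs_diff l m \<bar>W x\<bar> \<partial>M)"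
    by (simp add: integral_exp_abs_shift_diff[OF lm expT'])
  finally show ?thesis .
qed

lemma (in prob_space) integral_exp_abs_diff_inverse:
  fixes Z :: "'a \<Rightarrow> real" and \<sigma> \<tau> :: real
  assumes [measurable]: "Z \<in> borel_measurable M" and "0 < \<sigma>" "0 < \<tau>" "\<tau> \<noteq> \<sigma>"
  shows "(\<integral>x. exp_abs_diff (1 / \<sigma>) (1 / \<tau>) \<bar>Z x\<bar> \<partial>M)
       = \<tau> / (\<tau> + \<sigma>) * ((\<tau> * (\<integral>x. exp (- \<bar>Z x\<bar> / \<tau>) \<partial>M)
                           - \<sigma> * (\<integral>x. exp (- \<bar>Z x\<bar> / \<sigma>) \<partial>M)) / (\<tau> - \<sigma>))"
proof -
  have "integrable M (\<lambda>x. exp (- \<bar>Z x\<bar> / r))" if "0 < r" for r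
    using that by (intro integrable_const_bound[where B=1]) auto
  moreover have "\<tau> - \<sigma> \<noteq> 0" "\<tau> + \<sigma> \<noteq> 0" using assms by auto
  ultimately show ?thesis
    using assms by (simp add: exp_abs_diff_inverse diff_divide_distrib algebra_simps)
qed

lemma (in prob_space) integral_exp_abs_exponential_diff_inverse:
  fixes T T' W :: "'a \<Rightarrow> real" and \<sigma> \<tau> :: real
  assumes "0 < \<sigma>" "0 < \<tau>" "\<tau> \<noteq> \<sigma>"
    and expT: "distributed M lborel T (\<lambda>x. ennreal (exponential_density (1 / \<sigma>) x))"
    and expT': "distributed M lborel T' (\<lambda>x. ennreal (exponential_density (1 / \<sigma>) x))"
    and indT: "indep_var borel T borel (\<lambda>x. W x - T' x)"
    and indT': "indep_var borel T' borel W"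
  shows "(\<integral>x. exp (- \<bar>T x - T' x + W x\<bar> / \<tau>) \<partial>M)
       = \<tau> / (\<tau> + \<sigma>) * ((\<tau> * (\<integral>x. exp (- \<bar>W x\<bar> / \<tau>) \<partial>M)
                           - \<sigma> * (\<integral>x. exp (- \<bar>W x\<bar> / \<sigma>) \<partial>M)) / (\<tau> - \<sigma>))"
    (is "_ = ?rhs")
proof -
  have "0 < 1 / \<sigma>" "0 < 1 / \<tau>" "1 / \<sigma> \<noteq> 1 / \<tau>" using assms by auto
  from integral_exp_abs_exponential_diff[OF this expT expT' indT indT']
  have "(\<integral>x. exp (- \<bar>T x - T' x + W x\<bar> / \<tau>) \<partial>M)
      = (\<integral>x. exp_abs_diff (1 / \<sigma>) (1 / \<tau>) \<bar>W x\<bar> \<partial>M)"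
    by simp
  also have "\<dots> = ?rhs"
    using assms indep_var_rv2[OF indT'] by (intro integral_exp_abs_diff_inverse) auto
  finally show ?thesis .
qed

lemma (in prob_space) tendsto_integral_exp_abs_div:
  fixes Z :: "'a \<Rightarrow> real" and \<sigma> :: real
  assumes [measurable]: "Z \<in> borel_measurable M" and "0 < \<sigma>"
  shows "((\<lambda>\<tau>. \<integral>x. exp (- \<bar>Z x\<bar> / \<tau>) \<partial>M) \<longlongrightarrow> (\<integral>x. exp (- \<bar>Z x\<bar> / \<sigma>) \<partial>M)) (at \<sigma>)"
proof -
  \<comment> \<open>capping \<tau> away from 0 makes the constant 1 a dominating function\<close>
  define F where "F \<tau> = (\<integral>x. exp (- \<bar>Z x\<bar> / max \<tau> (\<sigma> / 2)) \<partial>M)" for \<tau>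
  have "(F \<longlongrightarrow> F \<sigma>) (at \<sigma>)"
    unfolding tendsto_at_iff_sequentially comp_def
  proof (intro allI impI)
    fix X :: "nat \<Rightarrow> real"
    assume "X \<longlonglongrightarrow> \<sigma>"
    then show "(\<lambda>i. F (X i)) \<longlonglongrightarrow> F \<sigma>"
      unfolding F_def using \<open>0 < \<sigma>\<close>
      by (intro integral_dominated_convergence[where w="\<lambda>_. 1"] AE_I2 tendsto_intros) auto
  qed
  moreover have "\<forall>\<^sub>F \<tau> in at \<sigma>. F \<tau> = (\<integral>x. exp (- \<bar>Z x\<bar> / \<tau>) \<partial>M)"
    unfolding eventually_at using \<open>0 < \<sigma>\<close>
    by (intro exI[of _ "\<sigma> / 2"]) (auto simp: F_def dist_real_def max_def)
  ultimately show ?thesis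
    using \<open>0 < \<sigma>\<close> by (simp add: F_def Lim_transform_eventually)
qed

lemma (in prob_space) tendsto_at_of_integral_exp_abs_div:
  fixes Z :: "'a \<Rightarrow> real" and R :: "real \<Rightarrow> real" and \<sigma> :: real
  assumes "Z \<in> borel_measurable M" "0 < \<sigma>"
    and R: "\<And>\<tau>. 0 < \<tau> \<Longrightarrow> \<tau> \<noteq> \<sigma> \<Longrightarrow> (\<integral>x. exp (- \<bar>Z x\<bar> / \<tau>) \<partial>M) = R \<tau>"
  shows "(R \<longlongrightarrow> (\<integral>x. exp (- \<bar>Z x\<bar> / \<sigma>) \<partial>M)) (at \<sigma>)"
proof (rule Lim_transform_eventually[OF tendsto_integral_exp_abs_div[OF assms(1,2)]])
  have "\<forall>\<^sub>F \<tau> in at \<sigma>. 0 < \<tau> \<and> \<tau> \<noteq> \<sigma>"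
    unfolding eventually_at using \<open>0 < \<sigma>\<close> by (intro exI[of _ \<sigma>]) (auto simp: dist_real_def)
  then show "\<forall>\<^sub>F \<tau> in at \<sigma>. (\<integral>x. exp (- \<bar>Z x\<bar> / \<tau>) \<partial>M) = R \<tau>"
    by (elim eventually_mono) (use R in blast)
qed

lemma (in prob_space) integral_even_abs_minus_symmetric:
  fixes Y S :: "'a \<Rightarrow> real" and g :: "real \<Rightarrow> real"
  assumes ind: "indep_var borel Y borel S"
    and sym: "distr M borel S = distr M borel (\<lambda>x. - S x)"
    and [measurable]: "g \<in> borel_measurable borel"
    and bound: "\<And>z. \<bar>g z\<bar> \<le> K" and even: "\<And>z. g (- z) = g z"
  shows "(\<integral>x. g (\<bar>Y x\<bar> - S x) \<partial>M) = (\<integral>x. g (Y x + S x) \<partial>M)"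
proof -
  have [measurable]: "Y \<in> borel_measurable M" "S \<in> borel_measurable M"
    using indep_var_rv1[OF ind] indep_var_rv2[OF ind] .
  define pos where "pos y s = (if 0 \<le> y then g (y - s) else 0)" for y s :: real
  define neg where "neg y s = (if 0 \<le> y then 0 else g (y + s))" for y s :: real
  have [measurable]: "(\<lambda>p. pos (fst p) (snd p)) \<in> borel_measurable (borel \<Otimes>\<^sub>M borel)"
    "(\<lambda>p. neg (fst p) (snd p)) \<in> borel_measurable (borel \<Otimes>\<^sub>M borel)"
    unfolding pos_def neg_def by measurable
  have "0 \<le> K"
    using order.trans[OF abs_ge_zero bound] .
  then have integrable: "integrable M (\<lambda>x. pos (Y x) (f x))" "integrable M (\<lambda>x. neg (Y x) (f x))"
    if [measurable]: "f \<in> borel_measurable M" for f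
    using bound by (auto simp: pos_def neg_def intro!: integrable_const_bound[where B=K])
  have "g (- y - s) = g (y + s)" for y s
    using even[of "y + s"] by simp
  then have "(\<integral>x. g (\<bar>Y x\<bar> - S x) \<partial>M) = (\<integral>x. pos (Y x) (S x) + neg (Y x) (S x) \<partial>M)"
    by (intro Bochner_Integration.integral_cong refl) (simp add: pos_def neg_def)
  also have "\<dots> = (\<integral>x. pos (Y x) (S x) \<partial>M) + (\<integral>x. neg (Y x) (S x) \<partial>M)"
    using integrable by simp
  also have "(\<integral>x. pos (Y x) (S x) \<partial>M) = (\<integral>x. pos (Y x) (- S x) \<partial>M)"
    by (rule integral_indep_var_symmetric[OF ind sym]) simp
  also have "\<dots> + (\<integral>x. neg (Y x) (S x) \<partial>M) = (\<integral>x. pos (Y x) (- S x) + neg (Y x) (S x) \<partial>M)"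
    using integrable by simp
  also have "\<dots> = (\<integral>x. g (Y x + S x) \<partial>M)"
    by (intro Bochner_Integration.integral_cong refl) (simp add: pos_def neg_def)
  finally show ?thesis .
qed

lemma (in prob_space) integral_exp_abs_exponential_diff_shift:
  fixes T T' G G' :: "'a \<Rightarrow> real" and \<sigma> \<tau> t :: real
  assumes "0 < \<sigma>" "0 < \<tau>" "\<tau> \<noteq> \<sigma>"
    and expT: "distributed M lborel T (\<lambda>x. ennreal (exponential_density (1 / \<sigma>) x))"
    and expT': "distributed M lborel T' (\<lambda>x. ennreal (exponential_density (1 / \<sigma>) x))"
    and indep: "indep_vars (\<lambda>_. borel) ((!) [T, T', G, G']) {..<4}"
  shows "(\<integral>x. exp (- \<bar>t + T x + G x - T' x - G' x\<bar> / \<tau>) \<partial>M)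
       = \<tau> / (\<tau> + \<sigma>) * ((\<tau> * (\<integral>x. exp (- \<bar>G' x - G x - t\<bar> / \<tau>) \<partial>M)
                           - \<sigma> * (\<integral>x. exp (- \<bar>G' x - G x - t\<bar> / \<sigma>) \<partial>M)) / (\<tau> - \<sigma>))"
proof -
  have "indep_var borel T borel (\<lambda>x. (t + G x - G' x) - T' x)"
    using indep_var_restrict_compose[OF indep, of "{0}" "{1, 2, 3}" "\<lambda>r. r 0" "\<lambda>r. t + r 2 - r 3 - r 1"]
    by (simp add: algebra_simps)
  moreover have "indep_var borel T' borel (\<lambda>x. t + G x - G' x)"
    using indep_var_restrict_compose[OF indep, of "{1}" "{2, 3}" "\<lambda>r. r 1" "\<lambda>r. t + r 2 - r 3"]
    by simp
  ultimately have "(\<integral>x. exp (- \<bar>T x - T' x + (t + G x - G' x)\<bar> / \<tau>) \<partial>M)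
      = \<tau> / (\<tau> + \<sigma>) * ((\<tau> * (\<integral>x. exp (- \<bar>t + G x - G' x\<bar> / \<tau>) \<partial>M)
                          - \<sigma> * (\<integral>x. exp (- \<bar>t + G x - G' x\<bar> / \<sigma>) \<partial>M)) / (\<tau> - \<sigma>))"
    by (rule integral_exp_abs_exponential_diff_inverse[OF assms(1-3) expT expT'])
  moreover have "\<bar>t + G x - G' x\<bar> = \<bar>G' x - G x - t\<bar>" for x
    by linarith
  ultimately show ?thesis
    by (simp add: algebra_simps)
qed

lemma (in prob_space) integral_exp_abs_exponential_diff_symmetric:
  fixes T T' G G' S :: "'a \<Rightarrow> real" and \<sigma> \<tau> :: real
  assumes "0 < \<sigma>" "0 < \<tau>" "\<tau> \<noteq> \<sigma>"
    and expT: "distributed M lborel T (\<lambda>x. ennreal (exponential_density (1 / \<sigma>) x))"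
    and expT': "distributed M lborel T' (\<lambda>x. ennreal (exponential_density (1 / \<sigma>) x))"
    and indep: "indep_vars (\<lambda>_. borel) ((!) [T, T', G, G', S]) {..<5}"
    and sym: "distr M borel S = distr M borel (\<lambda>x. - S x)"
  shows "(\<integral>x. exp (- \<bar>T x + G x - T' x - G' x + S x\<bar> / \<tau>) \<partial>M)
       = \<tau> / (\<tau> + \<sigma>) * ((\<tau> * (\<integral>x. exp (- \<bar>G' x - G x + S x\<bar> / \<tau>) \<partial>M)
                           - \<sigma> * (\<integral>x. exp (- \<bar>G' x - G x + S x\<bar> / \<sigma>) \<partial>M)) / (\<tau> - \<sigma>))"
proof -
  have "indep_var borel T borel (\<lambda>x. (G x - G' x + S x) - T' x)"
    using indep_var_restrict_compose[OF indep, of "{0}" "{1, 2, 3, 4}" "\<lambda>r. r 0" "\<lambda>r. r 2 - r 3 + r 4 - r 1"]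
    by (simp add: algebra_simps)
  moreover have "indep_var borel T' borel (\<lambda>x. G x - G' x + S x)"
    using indep_var_restrict_compose[OF indep, of "{1}" "{2, 3, 4}" "\<lambda>r. r 1" "\<lambda>r. r 2 - r 3 + r 4"]
    by simp
  ultimately have "(\<integral>x. exp (- \<bar>T x - T' x + (G x - G' x + S x)\<bar> / \<tau>) \<partial>M)
      = \<tau> / (\<tau> + \<sigma>) * ((\<tau> * (\<integral>x. exp (- \<bar>G x - G' x + S x\<bar> / \<tau>) \<partial>M)
                          - \<sigma> * (\<integral>x. exp (- \<bar>G x - G' x + S x\<bar> / \<sigma>) \<partial>M)) / (\<tau> - \<sigma>))"
    by (rule integral_exp_abs_exponential_diff_inverse[OF assms(1-3) expT expT'])
  moreover have "(\<integral>x. exp (- \<bar>G x - G' x + S x\<bar> / r) \<partial>M) = (\<integral>x. exp (- \<bar>G' x - G x + S x\<bar> / r) \<partial>M)"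
    for r
  proof -
    have "indep_var borel (\<lambda>x. G' x - G x) borel S"
      using indep_var_restrict_compose[OF indep, of "{2, 3}" "{4}" "\<lambda>r. r 3 - r 2" "\<lambda>r. r 4"]
      by simp
    from integral_indep_var_symmetric[OF this sym, of "\<lambda>d s. exp (- \<bar>d - s\<bar> / r)"]
    show ?thesis
      by (simp add: abs_minus_commute algebra_simps)
  qed
  ultimately show ?thesis
    by (simp add: algebra_simps)
qed

theorem lemma3:
  fixes M :: "'a measure" and \<sigma> :: real and T T' G G' :: "'a \<Rightarrow> real"
  assumes P: "prob_space M"
    and sigma_pos: "\<sigma> > 0"
    and expT: "distributed M lborel T (\<lambda>x. ennreal (exponential_density (1 / \<sigma>) x))"
    and expT': "distributed M lborel T' (\<lambda>x. ennreal (exponential_density (1 / \<sigma>) x))"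
    and measG: "G \<in> borel_measurable M" and measG': "G' \<in> borel_measurable M"
    and nonnegG: "\<forall>x\<in>space M. G x \<ge> 0" and nonnegG': "\<forall>x\<in>space M. G' x \<ge> 0"
    and identG: "distr M borel G = distr M borel G'"
    and indep: "prob_space.indep_vars M (\<lambda>_. borel) ((!) [T, T', G, G']) {..<4}"
  shows
    "(\<forall>t::real. \<forall>\<tau>::real. \<tau> > 0 \<longrightarrow> \<tau> \<noteq> \<sigma> \<longrightarrow>
        (\<integral>x. exp (- \<bar>t + T x + G x - T' x - G' x\<bar> / \<tau>) \<partial>M)
        = \<tau> / (\<tau> + \<sigma>) *
          ((\<tau> * (\<integral>x. exp (- \<bar>G' x - G x - t\<bar> / \<tau>) \<partial>M)
            - \<sigma> * (\<integral>x. exp (- \<bar>G' x - G x - t\<bar> / \<sigma>) \<partial>M)) / (\<tau> - \<sigma>)))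
   \<and> (\<forall>t::real.
        ((\<lambda>\<tau>. \<tau> / (\<tau> + \<sigma>) *
          ((\<tau> * (\<integral>x. exp (- \<bar>G' x - G x - t\<bar> / \<tau>) \<partial>M)
            - \<sigma> * (\<integral>x. exp (- \<bar>G' x - G x - t\<bar> / \<sigma>) \<partial>M)) / (\<tau> - \<sigma>)))
         \<longlongrightarrow> (\<integral>x. exp (- \<bar>t + T x + G x - T' x - G' x\<bar> / \<sigma>) \<partial>M)) (at \<sigma>))
   \<and> (\<forall>S :: 'a \<Rightarrow> real.
        S \<in> borel_measurable M
        \<longrightarrow> distr M borel S = distr M borel (\<lambda>x. - S x)
        \<longrightarrow> prob_space.indep_vars M (\<lambda>_. borel) ((!) [T, T', G, G', S]) {..<5}
        \<longrightarrow>
          (\<forall>\<tau>::real. \<tau> > 0 \<longrightarrow>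
             (\<integral>x. exp (- \<bar>\<bar>T x + G x - T' x - G' x\<bar> - S x\<bar> / \<tau>) \<partial>M)
             = (\<integral>x. exp (- \<bar>T x + G x - T' x - G' x + S x\<bar> / \<tau>) \<partial>M))
        \<and> (\<forall>\<tau>::real. \<tau> > 0 \<longrightarrow> \<tau> \<noteq> \<sigma> \<longrightarrow>
             (\<integral>x. exp (- \<bar>T x + G x - T' x - G' x + S x\<bar> / \<tau>) \<partial>M)
             = \<tau> / (\<tau> + \<sigma>) *
               ((\<tau> * (\<integral>x. exp (- \<bar>G' x - G x + S x\<bar> / \<tau>) \<partial>M)
                 - \<sigma> * (\<integral>x. exp (- \<bar>G' x - G x + S x\<bar> / \<sigma>) \<partial>M)) / (\<tau> - \<sigma>)))
        \<and> ((\<lambda>\<tau>. \<tau> / (\<tau> + \<sigma>) *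
               ((\<tau> * (\<integral>x. exp (- \<bar>G' x - G x + S x\<bar> / \<tau>) \<partial>M)
                 - \<sigma> * (\<integral>x. exp (- \<bar>G' x - G x + S x\<bar> / \<sigma>) \<partial>M)) / (\<tau> - \<sigma>)))
            \<longlongrightarrow> (\<integral>x. exp (- \<bar>T x + G x - T' x - G' x + S x\<bar> / \<sigma>) \<partial>M)) (at \<sigma>))"
proof -
  interpret prob_space M by (rule P)
  have [measurable]: "T \<in> borel_measurable M" "T' \<in> borel_measurable M"
    using distributed_measurable[OF expT] distributed_measurable[OF expT'] by simp_all
  note [measurable] = measG measG'
  note shift = integral_exp_abs_exponential_diff_shift[OF sigma_pos _ _ expT expT' indep]
  note symmetric = integral_exp_abs_exponential_diff_symmetric[OF sigma_pos _ _ expT expT']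
  show ?thesis
  proof (intro conjI allI impI)
    fix S and \<tau> :: real
    assume "S \<in> borel_measurable M" and sym: "distr M borel S = distr M borel (\<lambda>x. - S x)"
      and indep5: "indep_vars (\<lambda>_. borel) ((!) [T, T', G, G', S]) {..<5}" and "0 < \<tau>"
    have "indep_var borel (\<lambda>x. T x + G x - T' x - G' x) borel S"
      using indep_var_restrict_compose[OF indep5, of "{0, 1, 2, 3}" "{4}" "\<lambda>r. r 0 + r 2 - r 1 - r 3" "\<lambda>r. r 4"]
      by simp
    from integral_even_abs_minus_symmetric[OF this sym, where g="\<lambda>z. exp (- \<bar>z\<bar> / \<tau>)" and K=1]
    show "(\<integral>x. exp (- \<bar>\<bar>T x + G x - T' x - G' x\<bar> - S x\<bar> / \<tau>) \<partial>M)
        = (\<integral>x. exp (- \<bar>T x + G x - T' x - G' x + S x\<bar> / \<tau>) \<partial>M)"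
      using \<open>0 < \<tau>\<close> by simp
  qed (intro shift symmetric tendsto_at_of_integral_exp_abs_div[OF _ sigma_pos]; (assumption | measurable)?)+
qed

end
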